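(* Let $\mathcal G$ be a pseudogroup on a compact metric space $X$ with finite generating set $\mathcal G_1$. Then for every $x\in X$, $n\in\mathbb N$ and $\varepsilon>0$, the sets $B_n(x,\varepsilon)$, $B_n[x,\varepsilon]$ and $\Phi_\varepsilon(x)$ are Borel subsets of $X$.
   Context: $\mathrm{Homeo}(X)$: homeomorphisms $g:D_g\to R_g$ between open subsets of $X$, composed on natural domains $D_{h\circ g}=g^{-1}(D_h)$. A pseudogroup is a subset of $\mathrm{Homeo}(X)$ containing $\mathrm{id}_X$, closed under composition, inversion, restriction to open subsets, and gluing along open covers of the domain; $\mathcal G_1$ generates it if every element locally coincides with finite compositions of elements of $\mathcal G_1$ and their inverses. Let $\mathcal G_n=\{g_1\circ\cdots\circ g_n: g_i\in\mathcal G_1\}$, $\mathcal G_n^x=\{g\in\mathcal G_n: x\in D_g\}$, $B_n(x,\varepsilon)=\{y\in X: d(g(x),g(y))<\varepsilon\ \forall g\in\mathcal G_n^x\cap\mathcal G_n^y\}$, $B_n[x,\varepsilon]=\{y\in X: d(g(x),g(y))\le\varepsilon\ \forall g\in\mathcal G_n^x\cap\mathcal G_n^y\}$, and $\Phi_\varepsilon(x)=\bigcap_{n\in\mathbb N}B_n[x,\varepsilon]$. *)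

theory Defs
  imports "HOL-Analysis.Analysis"
begin

text \<open>A partial map on the space (UNIV of a metric-space type) is represented as a pair
  (domain, function), normalised to be the identity outside the domain so that
  equality of pairs is equality of partial maps.\<close>

type_synonym 'a pmap = "'a set \<times> ('a \<Rightarrow> 'a)"

definition pdom :: "'a pmap \<Rightarrow> 'a set" where "pdom g = fst g"
definition papp :: "'a pmap \<Rightarrow> 'a \<Rightarrow> 'a" where "papp g = snd g"

definition mkp :: "'a set \<Rightarrow> ('a \<Rightarrow> 'a) \<Rightarrow> 'a pmap" where
  "mkp D f = (D, \<lambda>x. if x \<in> D then f x else x)"

definition phomeo :: "'a::topological_space pmap \<Rightarrow> bool" where
  "phomeo g \<longleftrightarrow> open (pdom g) \<and> open (papp g ` pdom g)
     \<and> (\<exists>k. homeomorphism (pdom g) (papp g ` pdom g) (papp g) k)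
     \<and> (\<forall>x. x \<notin> pdom g \<longrightarrow> papp g x = x)"

definition pid :: "'a pmap" where "pid = mkp UNIV id"

definition pcomp :: "'a pmap \<Rightarrow> 'a pmap \<Rightarrow> 'a pmap" where
  "pcomp h g = mkp {x \<in> pdom g. papp g x \<in> pdom h} (\<lambda>x. papp h (papp g x))"

definition pinv :: "'a pmap \<Rightarrow> 'a pmap" where
  "pinv g = mkp (papp g ` pdom g) (inv_into (pdom g) (papp g))"

definition prestr :: "'a pmap \<Rightarrow> 'a set \<Rightarrow> 'a pmap" where
  "prestr g U = mkp (pdom g \<inter> U) (papp g)"

definition pseudogroup :: "'a::topological_space pmap set \<Rightarrow> bool" where
  "pseudogroup P \<longleftrightarrow>
     (\<forall>g\<in>P. phomeo g) \<and> pid \<in> P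
     \<and> (\<forall>g\<in>P. \<forall>h\<in>P. pcomp h g \<in> P)
     \<and> (\<forall>g\<in>P. pinv g \<in> P)
     \<and> (\<forall>g\<in>P. \<forall>U. open U \<longrightarrow> prestr g U \<in> P)
     \<and> (\<forall>g. phomeo g \<and> (\<forall>x\<in>pdom g. \<exists>U. open U \<and> x \<in> U \<and> prestr g U \<in> P) \<longrightarrow> g \<in> P)"

fun pcomp_list :: "'a pmap list \<Rightarrow> 'a pmap" where
  "pcomp_list [] = pid"
| "pcomp_list (g # gs) = pcomp g (pcomp_list gs)"

definition generates :: "'a::topological_space pmap set \<Rightarrow> 'a pmap set \<Rightarrow> bool" where
  "generates G1 P \<longleftrightarrow> G1 \<subseteq> P \<and>
     (\<forall>g\<in>P. \<forall>x\<in>pdom g. \<exists>U ws. open U \<and> x \<in> U \<and> U \<subseteq> pdom g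
        \<and> set ws \<subseteq> G1 \<union> pinv ` G1
        \<and> U \<subseteq> pdom (pcomp_list ws)
        \<and> (\<forall>y\<in>U. papp (pcomp_list ws) y = papp g y))"

definition Gn :: "'a pmap set \<Rightarrow> nat \<Rightarrow> 'a pmap set" where
  "Gn G1 n = {pcomp_list gs | gs. set gs \<subseteq> G1 \<and> length gs = n}"

definition Bn_open :: "'a::metric_space pmap set \<Rightarrow> nat \<Rightarrow> 'a \<Rightarrow> real \<Rightarrow> 'a set" where
  "Bn_open G1 n x \<epsilon> = {y. \<forall>g\<in>Gn G1 n. x \<in> pdom g \<and> y \<in> pdom g
       \<longrightarrow> dist (papp g x) (papp g y) < \<epsilon>}"

definition Bn_closed :: "'a::metric_space pmap set \<Rightarrow> nat \<Rightarrow> 'a \<Rightarrow> real \<Rightarrow> 'a set" where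
  "Bn_closed G1 n x \<epsilon> = {y. \<forall>g\<in>Gn G1 n. x \<in> pdom g \<and> y \<in> pdom g
       \<longrightarrow> dist (papp g x) (papp g y) \<le> \<epsilon>}"

definition Phi :: "'a::metric_space pmap set \<Rightarrow> real \<Rightarrow> 'a \<Rightarrow> 'a set" where
  "Phi G1 \<epsilon> x = (\<Inter>n\<in>{1..}. Bn_closed G1 n x \<epsilon>)"

end

theory Submission
  imports Defs
begin

text \<open>Every element of \<open>\<G>\<^sub>n\<close> is a homeomorphism between open sets, so
  \<open>y \<mapsto> d(g x, g y)\<close> is continuous on the open set \<open>D\<^sub>g\<close> and each condition defining
  the balls cuts out a Borel set; as \<open>\<G>\<^sub>n\<close> is countable, the balls are countable
  intersections of Borel sets, and so is \<open>\<Phi>\<^sub>\<epsilon>(x)\<close>.\<close>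

lemma pcomp_list_in_pseudogroup:
  assumes "pseudogroup P" "set gs \<subseteq> P"
  shows "pcomp_list gs \<in> P"
  using assms(2)
proof (induction gs)
  case Nil
  then show ?case using assms(1) by (simp add: pseudogroup_def)
next
  case (Cons g gs)
  then show ?case using assms(1) by (simp add: pseudogroup_def)
qed

lemma phomeo_Gn:
  assumes "pseudogroup P" "G1 \<subseteq> P" "g \<in> Gn G1 n"
  shows "phomeo g"
proof -
  obtain gs where "g = pcomp_list gs" "set gs \<subseteq> G1"
    using assms(3) by (auto simp: Gn_def)
  then have "g \<in> P" using pcomp_list_in_pseudogroup assms(1,2) by blast
  then show ?thesis using assms(1) by (simp add: pseudogroup_def)
qed

lemma countable_Gn:
  assumes "countable G1"
  shows "countable (Gn G1 n)"
proof -
  have "Gn G1 n \<subseteq> pcomp_list ` lists G1"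
    by (auto simp: Gn_def)
  then show ?thesis
    using assms by (blast intro: countable_subset countable_image countable_lists)
qed

lemma borel_Int_vimage_continuous_on:
  assumes "D \<in> sets borel" "continuous_on D f" "S \<in> sets borel"
  shows "D \<inter> f -` S \<in> sets borel"
proof -
  let ?f = "\<lambda>x. if x \<in> D then f x else undefined"
  have "?f \<in> borel_measurable borel"
    using assms(1,2) by (intro borel_measurable_continuous_on_if) auto
  then have "?f -` S \<in> sets borel"
    using assms(3) by (rule measurable_sets_borel)
  then have "D \<inter> ?f -` S \<in> sets borel"
    using assms(1) by blast
  moreover have "D \<inter> ?f -` S = D \<inter> f -` S"
    by auto
  ultimately show ?thesis by simp
qed

lemma phomeo_dist_vimage_borel:
  fixes g :: "'a::metric_space pmap"
  assumes "phomeo g" "S \<in> sets borel"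
  shows "{y. x \<in> pdom g \<and> y \<in> pdom g \<longrightarrow> dist (papp g x) (papp g y) \<in> S} \<in> sets borel"
proof (cases "x \<in> pdom g")
  case True
  let ?h = "\<lambda>y. dist (papp g x) (papp g y)"
  have "open (pdom g)" "continuous_on (pdom g) (papp g)"
    using assms(1) by (auto simp: phomeo_def homeomorphism_def)
  then have "pdom g \<inter> ?h -` S \<in> sets borel"
    using assms(2) by (intro borel_Int_vimage_continuous_on continuous_intros) auto
  moreover have "- pdom g \<in> sets borel"
    using \<open>open (pdom g)\<close> by (intro borel_closed) auto
  ultimately have "- pdom g \<union> (pdom g \<inter> ?h -` S) \<in> sets borel"
    by blast
  moreover have "{y. x \<in> pdom g \<and> y \<in> pdom g \<longrightarrow> ?h y \<in> S} = - pdom g \<union> (pdom g \<inter> ?h -` S)"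
    using True by blast
  ultimately show ?thesis by simp
qed simp

lemma Gn_dist_constraint_borel:
  fixes G1 :: "'a::metric_space pmap set"
  assumes "pseudogroup P" "G1 \<subseteq> P" "countable G1" "S \<in> sets borel"
  shows "{y. \<forall>g\<in>Gn G1 n. x \<in> pdom g \<and> y \<in> pdom g \<longrightarrow> dist (papp g x) (papp g y) \<in> S}
           \<in> sets borel"
proof -
  have "{y. \<forall>g\<in>Gn G1 n. x \<in> pdom g \<and> y \<in> pdom g \<longrightarrow> dist (papp g x) (papp g y) \<in> S}
      = (\<Inter>g\<in>Gn G1 n. {y. x \<in> pdom g \<and> y \<in> pdom g \<longrightarrow> dist (papp g x) (papp g y) \<in> S})"
    by blast
  also have "\<dots> \<in> sets borel"
  proof (intro sets.countable_INT'')
    show "countable (Gn G1 n)" using assms(3) by (rule countable_Gn)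
  next
    fix g assume "g \<in> Gn G1 n"
    with assms(1,2) have "phomeo g" by (rule phomeo_Gn)
    then show "{y. x \<in> pdom g \<and> y \<in> pdom g \<longrightarrow> dist (papp g x) (papp g y) \<in> S} \<in> sets borel"
      using assms(4) by (rule phomeo_dist_vimage_borel)
  qed simp
  finally show ?thesis .
qed

lemma Bn_open_borel:
  assumes "pseudogroup P" "G1 \<subseteq> P" "countable G1"
  shows "Bn_open G1 n x \<epsilon> \<in> sets borel"
  using Gn_dist_constraint_borel[OF assms, of "{..<\<epsilon>}" n x]
  by (simp add: Bn_open_def)

lemma Bn_closed_borel:
  assumes "pseudogroup P" "G1 \<subseteq> P" "countable G1"
  shows "Bn_closed G1 n x \<epsilon> \<in> sets borel"
  using Gn_dist_constraint_borel[OF assms, of "{..\<epsilon>}" n x]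
  by (simp add: Bn_closed_def)

lemma Phi_borel:
  assumes "pseudogroup P" "G1 \<subseteq> P" "countable G1"
  shows "Phi G1 \<epsilon> x \<in> sets borel"
  unfolding Phi_def using Bn_closed_borel[OF assms]
  by (intro sets.countable_INT'') auto

theorem mainTheorem4:
  fixes P G1 :: "'a::metric_space pmap set"
  assumes "compact (UNIV :: 'a set)"
    and "pseudogroup P"
    and "finite G1"
    and "generates G1 P"
  shows "\<forall>x n \<epsilon>. n \<ge> 1 \<and> \<epsilon> > 0 \<longrightarrow>
           Bn_open G1 n x \<epsilon> \<in> sets borel \<and> Bn_closed G1 n x \<epsilon> \<in> sets borel
           \<and> Phi G1 \<epsilon> x \<in> sets borel"
proof -
  have "G1 \<subseteq> P" using assms(4) by (simp add: generates_def)
  moreover have "countable G1" using assms(3) by (rule countable_finite)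
  ultimately show ?thesis
    using Bn_open_borel Bn_closed_borel Phi_borel assms(2) by metis
qed

end
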